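(* Let $Q$ be a set and let $\{*_\alpha\}_{\alpha\in\Lambda}$ be a family of quandle operations on $Q$ that are pairwise distributive with respect to each other, i.e. $(a*_\alpha b)*_\beta c=(a*_\beta c)*_\alpha(b*_\beta c)$ for all $\alpha,\beta\in\Lambda$ and $a,b,c\in Q$. Let $F$ be the free group on the symbols $*_\alpha$, and for $w\in F$ let $\star_w$ be the operation defined by $a\star_w b=(\cdots((a\,s_1\,b)\,s_2\,b)\cdots)\,s_k\,b$ for $w=s_1\cdots s_k$ (the letter $*_\alpha^{-1}$ acting as the right inverse operation of $*_\alpha$). Then the group $Q_F=\{(Q,\star_w)\mid w\in F\}$, with quandle multiplication $(Q,\star_w)(Q,\star_v)=(Q,\star_{wv})$, is commutative; that is, $\star_{wv}=\star_{vw}$ for all $w,v\in F$.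
   Context: A quandle operation on $Q$ is a binary operation $*$ with $x*x=x$, unique right division, and $(x*y)*z=(x*z)*(y*z)$. The right inverse $\bar*$ of $*$ is defined by $a=c*b\iff c=a\,\bar*\,b$. Quandle multiplication of two structures on the same set: $(Q,\circ)(Q,* )=(Q,\circ* )$ with $a\,(\circ* )\,b=(a\circ b)*b$; the unit of $Q_F$ is the trivial quandle ($a\star b=a$) and the inverse of $(Q,\star_w)$ is $(Q,\star_{w^{-1}})$. *)

theory Defs
  imports Main
begin

definition is_quandle :: "('q \<Rightarrow> 'q \<Rightarrow> 'q) \<Rightarrow> bool" where
  "is_quandle op \<longleftrightarrow>
     (\<forall>x. op x x = x) \<and>
     (\<forall>a b. \<exists>!c. op c b = a) \<and>
     (\<forall>x y z. op (op x y) z = op (op x z) (op y z))"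

definition rinv :: "('q \<Rightarrow> 'q \<Rightarrow> 'q) \<Rightarrow> 'q \<Rightarrow> 'q \<Rightarrow> 'q" where
  "rinv op a b = (THE c. op c b = a)"

text \<open>Words in the free group on the symbols, as lists of letters:
  (alpha, True) is the letter for the operation of index alpha, (alpha, False) its inverse.\<close>
type_synonym 'l fword = "('l \<times> bool) list"

definition star :: "('l \<Rightarrow> 'q \<Rightarrow> 'q \<Rightarrow> 'q) \<Rightarrow> 'l fword \<Rightarrow> 'q \<Rightarrow> 'q \<Rightarrow> 'q" where
  "star ops w a b =
     foldl (\<lambda>x (al, s). if s then ops al x b else rinv (ops al) x b) a w"

end

(* For a fixed right argument b, the letter *_al of a word acts on the left argument
   as the right translation x \<mapsto> x *_al b, and its inverse letter as the inverse
   translation.  Mutual distributivity together with idempotence b *_be b = b makes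
   any two right translations by b commute, hence so do their inverses.  The action
   of a word is then a composite of pairwise commuting maps, which only depends on
   the multiset of its letters; in particular w v and v w act alike. *)
theory Submission
  imports Defs "HOL-Library.Multiset"
begin

lemma is_quandle_right_div: "is_quandle op \<Longrightarrow> \<exists>!c. op c b = a"
  unfolding is_quandle_def by blast

lemma op_rinv:
  assumes "\<And>a. \<exists>!c. op c b = a"
  shows "op (rinv op a b) b = a"
  unfolding rinv_def using assms by (rule theI')

lemma rinv_op:
  assumes "\<And>a. \<exists>!c. op c b = a"
  shows "rinv op (op a b) b = a"
  unfolding rinv_def using assms by (rule the1_equality) simp

lemma commute_with_inverse:
  assumes "\<And>x. f (g x) = g (f x)" and "\<And>x. g (h x) = x" and "\<And>x. h (g x) = x"
  shows "f (h x) = h (f x)"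
  by (metis assms)

lemma right_translations_commute:
  assumes distrib: "\<And>a b c. ops be (ops al a b) c = ops al (ops be a c) (ops be b c)"
    and "ops be b b = b"
  shows "ops be (ops al x b) b = ops al (ops be x b) b"
  using assms by metis

definition letter_act :: "('l \<Rightarrow> 'q \<Rightarrow> 'q \<Rightarrow> 'q) \<Rightarrow> 'q \<Rightarrow> 'l \<times> bool \<Rightarrow> 'q \<Rightarrow> 'q" where
  "letter_act ops b = (\<lambda>(al, s) x. if s then ops al x b else rinv (ops al) x b)"

lemma star_conv_fold: "star ops w a b = fold (letter_act ops b) w a"
  unfolding star_def letter_act_def foldl_conv_fold
  by (rule arg_cong[where f = "\<lambda>f. fold f w a"]) (auto split: prod.split)

lemma letter_acts_commute:
  assumes quandle: "\<And>al. is_quandle (ops al)"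
    and distrib: "\<And>al be a b c. ops be (ops al a b) c = ops al (ops be a c) (ops be b c)"
  shows "letter_act ops b l \<circ> letter_act ops b l' = letter_act ops b l' \<circ> letter_act ops b l"
proof -
  have div: "\<And>al a. \<exists>!c. ops al c b = a"
    using quandle by (rule is_quandle_right_div)
  have idem: "\<And>be. ops be b b = b"
    using quandle unfolding is_quandle_def by blast
  have trans_trans: "\<And>al be x. ops al (ops be x b) b = ops be (ops al x b) b"
    using right_translations_commute distrib idem by metis
  have trans_inv: "ops al (rinv (ops be) x b) b = rinv (ops be) (ops al x b) b" for al be x
    by (rule commute_with_inverse[where g = "\<lambda>x. ops be x b"])
      (simp_all add: trans_trans op_rinv rinv_op div)
  have inv_inv: "rinv (ops al) (rinv (ops be) x b) b = rinv (ops be) (rinv (ops al) x b) b"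
    for al be x
    by (rule commute_with_inverse[where g = "\<lambda>x. ops be x b"])
      (simp_all add: trans_inv op_rinv rinv_op div)
  obtain al s be t where "l = (al, s)" "l' = (be, t)"
    by fastforce
  then show ?thesis
    unfolding letter_act_def by (cases s; cases t) (auto simp: trans_trans trans_inv inv_inv)
qed

theorem corollary4p15:
  fixes ops :: "'l \<Rightarrow> 'q \<Rightarrow> 'q \<Rightarrow> 'q"
  assumes quandle: "\<And>al. is_quandle (ops al)"
    and distrib: "\<And>al be a b c. ops be (ops al a b) c = ops al (ops be a c) (ops be b c)"
  shows "\<forall>w v :: 'l fword. star ops (w @ v) = star ops (v @ w)"
proof (intro allI ext)
  fix w v :: "'l fword" and a b
  have "fold (letter_act ops b) (w @ v) = fold (letter_act ops b) (v @ w)"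
    by (rule fold_multiset_equiv) (simp_all add: letter_acts_commute[OF quandle distrib])
  then show "star ops (w @ v) a b = star ops (v @ w) a b"
    by (simp only: star_conv_fold)
qed

end
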